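(* Let $\mathcal{D}\subset\mathbb{R}^d$ be compact, $0<a,b<\infty$, $c:=a+b$, and let $\mathcal{B}=\{\phi_j\}_{j=0}^\infty$ be any orthonormal (Schauder) basis of $\mathbf{L}^2(\mathcal{D})$. Then for every $f\in\mathcal{F}$, every $p_Z\in\mathcal{P}_Z$, every $n\ge1$ and every $m\ge1$, the estimator $\hat f_{n,m}$ satisfies \[ D:=\mathbb{E}\left[\|f-\hat f_{n,m}\|^2\right]\le \frac{c^2}{n}\sum_{j=0}^{m-1}\int_{\mathcal{D}}\frac{|\phi_j(x)|^2}{p_X(x)}\,dx+\varepsilon[f,m,\mathcal{B}], \] where $\varepsilon[f,m,\mathcal{B}]$ is a non-negative sequence in $m$, non-increasing in $m$, which converges to $0$ as $m\to\infty$.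
   Context: $\mathcal{F}$ is the set of all measurable functions $f:\mathcal{D}\to[-a,+a]$ (so $\mathcal{F}\subseteq\mathbf{L}^2(\mathcal{D})$). $p_X$ is a probability density on $\mathcal{D}$ (absolutely continuous w.r.t. Lebesgue measure) whose support is $\mathcal{D}$. $\mathcal{P}_Z$ is the set of all probability distributions on $\mathbb{R}$ with mean zero and support contained in $[-b,+b]$. Given $n$, let $X_1,\dots,X_n$ be i.i.d. with density $p_X$, $Z_1,\dots,Z_n$ i.i.d. with distribution $p_Z$, and $T_1,\dots,T_n$ i.i.d. uniform on $[-c,+c]$, all mutually independent. Let $Y_i=f(X_i)+Z_i$ and $B_i=+1$ if $Y_i>T_i$, $B_i=-1$ if $Y_i\le T_i$. Inner product $\langle g,h\rangle=\int_{\mathcal{D}}g(x)h^*(x)\,dx$, $\|g\|^2=\langle g,g\rangle$; $\alpha_j:=\langle f,\phi_j\rangle$. The estimator is $\hat\alpha_j:=\frac{c}{n}\sum_{i=1}^n\frac{\phi_j^*(X_i)}{p_X(X_i)}B_i$ and $\hat f_{n,m}:=\sum_{j=0}^{m-1}\hat\alpha_j\phi_j$. The $m$-term approximation error is $\varepsilon[f,m,\mathcal{B}]:=\sum_{j=m}^\infty|\langle f,\phi_j\rangle|^2$. The expectation is over the $X_i,Z_i,T_i$. *)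

theory Defs
  imports "HOL-Probability.Probability"
begin

definition LD :: "'a::euclidean_space set \<Rightarrow> 'a measure" where
  "LD D = restrict_space lebesgue D"

definition sq_int :: "'a::euclidean_space set \<Rightarrow> ('a \<Rightarrow> complex) \<Rightarrow> bool" where
  "sq_int D g \<longleftrightarrow> g \<in> borel_measurable (LD D) \<and> integrable (LD D) (\<lambda>x. (cmod (g x))\<^sup>2)"

definition L2_inner :: "'a::euclidean_space set \<Rightarrow> ('a \<Rightarrow> complex) \<Rightarrow> ('a \<Rightarrow> complex) \<Rightarrow> complex" where
  "L2_inner D g h = (\<integral>x. g x * cnj (h x) \<partial>LD D)"

definition orthonormal_basis_L2 :: "'a::euclidean_space set \<Rightarrow> (nat \<Rightarrow> 'a \<Rightarrow> complex) \<Rightarrow> bool" where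
  "orthonormal_basis_L2 D \<phi> \<longleftrightarrow>
     (\<forall>j. sq_int D (\<phi> j)) \<and>
     (\<forall>j k. L2_inner D (\<phi> j) (\<phi> k) = (if j = k then 1 else 0)) \<and>
     (\<forall>g. sq_int D g \<longrightarrow>
        (\<lambda>m. \<integral>x. (cmod (g x - (\<Sum>j<m. L2_inner D g (\<phi> j) * \<phi> j x)))\<^sup>2 \<partial>LD D) \<longlonglongrightarrow> 0)"

definition coef :: "'a::euclidean_space set \<Rightarrow> (nat \<Rightarrow> 'a \<Rightarrow> complex) \<Rightarrow> ('a \<Rightarrow> real) \<Rightarrow> nat \<Rightarrow> complex" where
  "coef D \<phi> f j = L2_inner D (\<lambda>x. complex_of_real (f x)) (\<phi> j)"

definition approx_err :: "'a::euclidean_space set \<Rightarrow> (nat \<Rightarrow> 'a \<Rightarrow> complex) \<Rightarrow> ('a \<Rightarrow> real) \<Rightarrow> nat \<Rightarrow> real" where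
  "approx_err D \<phi> f m = (\<Sum>j. (cmod (coef D \<phi> f (j + m)))\<^sup>2)"

text \<open>Distribution of one sample (X_i, Z_i, T_i): X has density pX on D, Z ~ pZ,
  T uniform on [-c,c]; all independent.\<close>
definition sample_measure :: "'a::euclidean_space set \<Rightarrow> ('a \<Rightarrow> real) \<Rightarrow> real measure \<Rightarrow> real
     \<Rightarrow> ('a \<times> real \<times> real) measure" where
  "sample_measure D pX pZ c =
     density (LD D) (\<lambda>x. ennreal (pX x)) \<Otimes>\<^sub>M (pZ \<Otimes>\<^sub>M uniform_measure lborel {-c..c})"

definition data_measure :: "'a::euclidean_space set \<Rightarrow> ('a \<Rightarrow> real) \<Rightarrow> real measure \<Rightarrow> real \<Rightarrow> nat
     \<Rightarrow> (nat \<Rightarrow> 'a \<times> real \<times> real) measure" where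
  "data_measure D pX pZ c n = PiM {..<n} (\<lambda>_. sample_measure D pX pZ c)"

definition bit :: "('a \<Rightarrow> real) \<Rightarrow> 'a \<times> real \<times> real \<Rightarrow> real" where
  "bit f s = (case s of (x, z, t) \<Rightarrow> if f x + z > t then 1 else -1)"

definition coef_hat :: "real \<Rightarrow> nat \<Rightarrow> (nat \<Rightarrow> 'a \<Rightarrow> complex) \<Rightarrow> ('a \<Rightarrow> real) \<Rightarrow> ('a \<Rightarrow> real)
     \<Rightarrow> (nat \<Rightarrow> 'a \<times> real \<times> real) \<Rightarrow> nat \<Rightarrow> complex" where
  "coef_hat c n \<phi> pX f \<omega> j =
     complex_of_real (c / real n) *
       (\<Sum>i<n. cnj (\<phi> j (fst (\<omega> i))) / complex_of_real (pX (fst (\<omega> i)))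
                 * complex_of_real (bit f (\<omega> i)))"

definition f_hat :: "real \<Rightarrow> nat \<Rightarrow> nat \<Rightarrow> (nat \<Rightarrow> 'a \<Rightarrow> complex) \<Rightarrow> ('a \<Rightarrow> real) \<Rightarrow> ('a \<Rightarrow> real)
     \<Rightarrow> (nat \<Rightarrow> 'a \<times> real \<times> real) \<Rightarrow> 'a \<Rightarrow> complex" where
  "f_hat c n m \<phi> pX f \<omega> x = (\<Sum>j<m. coef_hat c n \<phi> pX f \<omega> j * \<phi> j x)"

end

theory Submission
  imports Defs
begin

text \<open>
  By orthonormality, for every sample the squared \<open>L\<^sup>2\<close> error of the estimator is the
  approximation error \<open>\<epsilon>[f,m,B]\<close> plus the squared errors of the first \<open>m\<close> estimated
  coefficients; Parseval's identity makes \<open>\<epsilon>[f,m,B]\<close> the tail of the convergent series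
  \<open>\<Sum>\<^sub>j |\<alpha>\<^sub>j|\<^sup>2\<close>, hence nonnegative, non-increasing and null. Each estimated coefficient is
  the mean of \<open>n\<close> i.i.d. copies of \<open>W = c \<phi>\<^sub>j\<^sup>*(X) B / p\<^sub>X(X)\<close>. Given \<open>X = x\<close> and
  \<open>Z = z\<close>, the uniform dither on \<open>[-c, c]\<close> gives \<open>E B = (f x + z) / c\<close>, so \<open>E Z = 0\<close>
  makes \<open>W\<close> unbiased for \<open>\<alpha>\<^sub>j\<close>. Its mean squared error is therefore
  \<open>Var W / n \<le> E |W|\<^sup>2 / n\<close>, and \<open>|B| = 1\<close> gives \<open>E |W|\<^sup>2 = c\<^sup>2 \<integral> |\<phi>\<^sub>j|\<^sup>2 / p\<^sub>X\<close>.
\<close>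

lemma (in finite_measure) square_norm_integrable_imp_integrable:
  fixes f :: "'a \<Rightarrow> 'b::{second_countable_topology, banach, real_normed_div_algebra}"
  assumes [measurable]: "f \<in> borel_measurable M" and "integrable M (\<lambda>x. (norm (f x))\<^sup>2)"
  shows "integrable M f"
proof (rule square_integrable_imp_integrable[OF assms(1)])
  have "integrable M (\<lambda>x. norm ((f x)\<^sup>2))"
    using assms(2) by (simp add: norm_power)
  then show "integrable M (\<lambda>x. (f x)\<^sup>2)"
    by (subst (asm) integrable_norm_iff) auto
qed

lemma (in prob_space) iid_pair_moment:
  fixes u :: "'a \<Rightarrow> real" and i k n :: nat
  assumes u1: "integrable M u" and u2: "integrable M (\<lambda>s. (u s)\<^sup>2)" and "i < n" "k < n"
  shows "integrable (PiM {..<n} (\<lambda>_. M)) (\<lambda>\<omega>. u (\<omega> i) * u (\<omega> k))"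
    and "(\<integral>\<omega>. u (\<omega> i) * u (\<omega> k) \<partial>PiM {..<n} (\<lambda>_. M))
           = (if i = k then expectation (\<lambda>s. (u s)\<^sup>2) else (expectation u)\<^sup>2)"
proof -
  interpret P: product_prob_space "\<lambda>_::nat. M" ..
  define g where "g l = (\<lambda>s. (if l = i then u s else 1) * (if l = k then u s else 1))" for l
  have g_int: "integrable M (g l)" for l
    using u1 u2 by (cases "l = i"; cases "l = k") (auto simp: g_def power2_eq_square)
  have prod_g: "(\<Prod>l<n. g l (\<omega> l)) = u (\<omega> i) * u (\<omega> k)" for \<omega>
    using assms(3,4) by (simp add: g_def prod.distrib prod.delta)
  show "integrable (PiM {..<n} (\<lambda>_. M)) (\<lambda>\<omega>. u (\<omega> i) * u (\<omega> k))"
    unfolding prod_g[symmetric] by (intro P.product_integrable_prod g_int) simp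
  have "(\<integral>\<omega>. u (\<omega> i) * u (\<omega> k) \<partial>PiM {..<n} (\<lambda>_. M)) = (\<Prod>l<n. expectation (g l))"
    unfolding prod_g[symmetric] by (intro P.product_integral_prod g_int) simp
  also have "\<dots> = (if i = k then expectation (\<lambda>s. (u s)\<^sup>2) else (expectation u)\<^sup>2)"
  proof (cases "i = k")
    case True
    then have "expectation (g l) = (if l = k then expectation (\<lambda>s. (u s)\<^sup>2) else 1)" for l
      by (simp add: g_def prob_space power2_eq_square)
    with True assms(4) show ?thesis by simp
  next
    case False
    then have "expectation (g l) = (if l = i then expectation u else 1) * (if l = k then expectation u else 1)" for l
      by (auto simp: g_def prob_space)
    with False assms(3,4) show ?thesis by (simp add: prod.distrib power2_eq_square)
  qed
  finally show "(\<integral>\<omega>. u (\<omega> i) * u (\<omega> k) \<partial>PiM {..<n} (\<lambda>_. M))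
           = (if i = k then expectation (\<lambda>s. (u s)\<^sup>2) else (expectation u)\<^sup>2)" .
qed

lemma (in prob_space) iid_centered_sum_sq_integral:
  fixes v :: "'a \<Rightarrow> real" and n :: nat
  assumes v: "v \<in> borel_measurable M" and v2: "integrable M (\<lambda>s. (v s)\<^sup>2)"
  shows "integrable (PiM {..<n} (\<lambda>_. M)) (\<lambda>\<omega>. (\<Sum>i<n. v (\<omega> i) - expectation v)\<^sup>2)"
    and "(\<integral>\<omega>. (\<Sum>i<n. v (\<omega> i) - expectation v)\<^sup>2 \<partial>PiM {..<n} (\<lambda>_. M)) = real n * variance v"
proof -
  define u where "u = (\<lambda>s. v s - expectation v)"
  have v1: "integrable M v"
    using square_integrable_imp_integrable[OF v v2] .
  have u1: "integrable M u" and u2: "integrable M (\<lambda>s. (u s)\<^sup>2)"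
    using v1 v2 by (simp_all add: u_def power2_diff)
  have Eu: "expectation u = 0"
    using v1 by (simp add: u_def prob_space)
  have sq: "(\<Sum>i<n. v (\<omega> i) - expectation v)\<^sup>2 = (\<Sum>i<n. \<Sum>k<n. u (\<omega> i) * u (\<omega> k))" for \<omega>
    unfolding u_def power2_eq_square sum_product by simp
  note pair = iid_pair_moment[OF u1 u2]
  show "integrable (PiM {..<n} (\<lambda>_. M)) (\<lambda>\<omega>. (\<Sum>i<n. v (\<omega> i) - expectation v)\<^sup>2)"
    unfolding sq by (auto intro!: integrable_sum pair(1))
  have "(\<integral>\<omega>. (\<Sum>i<n. v (\<omega> i) - expectation v)\<^sup>2 \<partial>PiM {..<n} (\<lambda>_. M))
      = (\<Sum>i<n. \<Sum>k<n. \<integral>\<omega>. u (\<omega> i) * u (\<omega> k) \<partial>PiM {..<n} (\<lambda>_. M))"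
    unfolding sq
    by (subst Bochner_Integration.integral_sum, auto intro!: integrable_sum pair(1))
      (auto intro!: sum.cong Bochner_Integration.integral_sum pair(1))
  also have "\<dots> = real n * expectation (\<lambda>s. (u s)\<^sup>2)"
    by (simp add: pair(2) Eu cong: if_cong)
  finally show "(\<integral>\<omega>. (\<Sum>i<n. v (\<omega> i) - expectation v)\<^sup>2 \<partial>PiM {..<n} (\<lambda>_. M)) = real n * variance v"
    by (simp add: u_def)
qed

lemma (in prob_space) iid_sample_mean_sq_error_le:
  fixes w :: "'a \<Rightarrow> complex" and n :: nat
  assumes w: "w \<in> borel_measurable M" and w2: "integrable M (\<lambda>s. (cmod (w s))\<^sup>2)" and n: "n \<ge> 1"
  shows "(\<integral>\<^sup>+\<omega>. ennreal ((cmod (expectation w - (\<Sum>i<n. w (\<omega> i)) / of_nat n))\<^sup>2) \<partial>PiM {..<n} (\<lambda>_. M))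
           \<le> ennreal (expectation (\<lambda>s. (cmod (w s))\<^sup>2) / n)"
proof -
  define P where "P = PiM {..<n} (\<lambda>_. M)"
  define dev where "dev v \<omega> = (\<Sum>i<n. v (\<omega> i) - expectation v)\<^sup>2" for v :: "'a \<Rightarrow> real" and \<omega>
  have w1: "integrable M w"
    by (rule square_norm_integrable_imp_integrable[OF w w2])
  have re: "(\<lambda>s. Re (w s)) \<in> borel_measurable M" and im: "(\<lambda>s. Im (w s)) \<in> borel_measurable M"
    using w by simp_all
  have re2: "integrable M (\<lambda>s. (Re (w s))\<^sup>2)" and im2: "integrable M (\<lambda>s. (Im (w s))\<^sup>2)"
    using w2 w by (auto intro!: Bochner_Integration.integrable_bound[OF w2] AE_I2 simp: cmod_def)
  have pointwise: "(cmod (expectation w - (\<Sum>i<n. w (\<omega> i)) / of_nat n))\<^sup>2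
      = (dev (\<lambda>s. Re (w s)) \<omega> + dev (\<lambda>s. Im (w s)) \<omega>) / (real n)\<^sup>2" for \<omega>
    using n w1 unfolding cmod_power2 dev_def
    by (simp add: Re_sum Im_sum sum_subtractf power2_eq_square field_simps)
  have dev_int: "integrable P (dev (\<lambda>s. Re (w s)))" "integrable P (dev (\<lambda>s. Im (w s)))"
    unfolding P_def dev_def
    by (rule iid_centered_sum_sq_integral(1)[OF re re2], rule iid_centered_sum_sq_integral(1)[OF im im2])
  have "(\<integral>\<^sup>+\<omega>. ennreal ((cmod (expectation w - (\<Sum>i<n. w (\<omega> i)) / of_nat n))\<^sup>2) \<partial>P)
      = ennreal (\<integral>\<omega>. (dev (\<lambda>s. Re (w s)) \<omega> + dev (\<lambda>s. Im (w s)) \<omega>) / (real n)\<^sup>2 \<partial>P)"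
    unfolding pointwise
    by (intro nn_integral_eq_integral integrable_divide_zero Bochner_Integration.integrable_add dev_int)
      (auto simp: dev_def)
  also have "(\<integral>\<omega>. (dev (\<lambda>s. Re (w s)) \<omega> + dev (\<lambda>s. Im (w s)) \<omega>) / (real n)\<^sup>2 \<partial>P)
      = ((\<integral>\<omega>. dev (\<lambda>s. Re (w s)) \<omega> \<partial>P) + (\<integral>\<omega>. dev (\<lambda>s. Im (w s)) \<omega> \<partial>P)) / (real n)\<^sup>2"
    using dev_int by simp
  also have "\<dots> = (variance (\<lambda>s. Re (w s)) + variance (\<lambda>s. Im (w s))) / n"
    using n unfolding P_def dev_def
      iid_centered_sum_sq_integral(2)[OF re re2] iid_centered_sum_sq_integral(2)[OF im im2]
    by (simp add: power2_eq_square field_simps)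
  also have "\<dots> \<le> expectation (\<lambda>s. (cmod (w s))\<^sup>2) / n"
  proof -
    have "variance (\<lambda>s. Re (w s)) \<le> expectation (\<lambda>s. (Re (w s))\<^sup>2)"
      using variance_eq[of "\<lambda>s. Re (w s)"] w1 re2 by simp
    moreover have "variance (\<lambda>s. Im (w s)) \<le> expectation (\<lambda>s. (Im (w s))\<^sup>2)"
      using variance_eq[of "\<lambda>s. Im (w s)"] w1 im2 by simp
    ultimately show ?thesis
      using re2 im2 by (simp add: cmod_power2 divide_right_mono)
  qed
  finally show ?thesis
    unfolding P_def by (simp add: ennreal_leI)
qed

lemma borel_measurable_cnj [measurable]:
  "f \<in> borel_measurable M \<Longrightarrow> (\<lambda>x. cnj (f x)) \<in> borel_measurable M"
  by (rule borel_measurable_continuous_on[OF linear_continuous_on[OF bounded_linear_cnj]])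

lemma space_LD [simp]: "space (LD D) = D"
  by (simp add: LD_def space_restrict_space)

lemma finite_measure_LD:
  assumes "compact D"
  shows "finite_measure (LD D)"
proof (rule finite_measureI)
  have "D \<in> lmeasurable"
    by (rule lmeasurable_compact[OF assms])
  then have "D \<in> sets lebesgue" "emeasure lebesgue D < \<infinity>"
    unfolding fmeasurable_def by blast+
  then show "emeasure (LD D) (space (LD D)) \<noteq> \<infinity>"
    by (simp add: LD_def emeasure_restrict_space)
qed

lemma sq_int_bounded:
  assumes "compact D" "g \<in> borel_measurable (LD D)" "\<forall>x\<in>D. cmod (g x) \<le> a"
  shows "sq_int D g"
proof -
  interpret finite_measure "LD D"
    by (rule finite_measure_LD[OF assms(1)])
  have "(cmod (g x))\<^sup>2 \<le> a\<^sup>2" if "x \<in> D" for x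
    using power_mono[OF assms(3)[rule_format, OF that] norm_ge_zero] .
  then show ?thesis
    unfolding sq_int_def using assms(2)
    by (auto intro!: integrable_const_bound[where B="a\<^sup>2"] AE_I2)
qed

lemma sq_int_mult_cnj_integrable:
  assumes "sq_int D g" "sq_int D h"
  shows "integrable (LD D) (\<lambda>x. g x * cnj (h x))"
proof (rule Bochner_Integration.integrable_bound[of _ "\<lambda>x. (cmod (g x))\<^sup>2 + (cmod (h x))\<^sup>2"])
  show "integrable (LD D) (\<lambda>x. (cmod (g x))\<^sup>2 + (cmod (h x))\<^sup>2)"
    using assms by (simp add: sq_int_def)
  show "(\<lambda>x. g x * cnj (h x)) \<in> borel_measurable (LD D)"
    using assms by (auto simp: sq_int_def)
  have "cmod (g x) * cmod (h x) \<le> (cmod (g x))\<^sup>2 + (cmod (h x))\<^sup>2" for x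
    using sum_squares_bound[of "cmod (g x)" "cmod (h x)"] mult_nonneg_nonneg[OF norm_ge_zero norm_ge_zero, of "g x" "h x"]
    by linarith
  then show "AE x in LD D. norm (g x * cnj (h x)) \<le> norm ((cmod (g x))\<^sup>2 + (cmod (h x))\<^sup>2)"
    by (simp add: norm_mult)
qed

lemma sq_int_add:
  assumes "sq_int D g" "sq_int D h"
  shows "sq_int D (\<lambda>x. g x + h x)"
  unfolding sq_int_def
proof
  show "(\<lambda>x. g x + h x) \<in> borel_measurable (LD D)"
    using assms by (auto simp: sq_int_def)
  show "integrable (LD D) (\<lambda>x. (cmod (g x + h x))\<^sup>2)"
  proof (rule Bochner_Integration.integrable_bound)
    show "integrable (LD D) (\<lambda>x. 2 * (cmod (g x))\<^sup>2 + 2 * (cmod (h x))\<^sup>2)"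
      using assms by (simp add: sq_int_def)
    show "(\<lambda>x. (cmod (g x + h x))\<^sup>2) \<in> borel_measurable (LD D)"
      using assms by (auto simp: sq_int_def)
    have "(cmod (g x + h x))\<^sup>2 \<le> 2 * (cmod (g x))\<^sup>2 + 2 * (cmod (h x))\<^sup>2" for x
    proof -
      have "(cmod (g x + h x))\<^sup>2 \<le> (cmod (g x) + cmod (h x))\<^sup>2"
        by (rule power_mono[OF norm_triangle_ineq norm_ge_zero])
      also have "\<dots> \<le> 2 * (cmod (g x))\<^sup>2 + 2 * (cmod (h x))\<^sup>2"
        using sum_squares_bound[of "cmod (g x)" "cmod (h x)"] by (simp add: power2_sum)
      finally show ?thesis .
    qed
    then show "AE x in LD D. norm ((cmod (g x + h x))\<^sup>2) \<le> norm (2 * (cmod (g x))\<^sup>2 + 2 * (cmod (h x))\<^sup>2)"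
      by simp
  qed
qed

lemma sq_int_cmult:
  "sq_int D g \<Longrightarrow> sq_int D (\<lambda>x. c * g x)"
  by (auto simp: sq_int_def norm_mult power_mult_distrib)

lemma sq_int_diff:
  "sq_int D g \<Longrightarrow> sq_int D h \<Longrightarrow> sq_int D (\<lambda>x. g x - h x)"
  using sq_int_add[of D g "\<lambda>x. -1 * h x"] sq_int_cmult[of D h "-1"] by simp

lemma sq_int_sum:
  "(\<And>j. j \<in> J \<Longrightarrow> sq_int D (g j)) \<Longrightarrow> sq_int D (\<lambda>x. \<Sum>j\<in>J. c j * g j x)"
proof (induction J rule: infinite_finite_induct)
  case (insert j J)
  then show ?case by (simp add: sq_int_add sq_int_cmult)
qed (simp_all add: sq_int_def)

lemma L2_inner_commute: "L2_inner D h g = cnj (L2_inner D g h)"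
  unfolding L2_inner_def Bochner_Integration.integral_cnj[symmetric] by (simp add: mult.commute)

lemma L2_inner_diff_left:
  assumes "sq_int D g" "sq_int D h" "sq_int D k"
  shows "L2_inner D (\<lambda>x. g x - h x) k = L2_inner D g k - L2_inner D h k"
  unfolding L2_inner_def
  using sq_int_mult_cnj_integrable[OF assms(1,3)] sq_int_mult_cnj_integrable[OF assms(2,3)]
  by (simp add: left_diff_distrib)

lemma L2_inner_diff_right:
  assumes "sq_int D g" "sq_int D h" "sq_int D k"
  shows "L2_inner D k (\<lambda>x. g x - h x) = L2_inner D k g - L2_inner D k h"
  by (subst (1 2 3) L2_inner_commute) (simp add: L2_inner_diff_left[OF assms])

lemma L2_inner_sum_left:
  assumes "\<And>j. j \<in> J \<Longrightarrow> sq_int D (g j)" "sq_int D h"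
  shows "L2_inner D (\<lambda>x. \<Sum>j\<in>J. c j * g j x) h = (\<Sum>j\<in>J. c j * L2_inner D (g j) h)"
proof -
  have "L2_inner D (\<lambda>x. \<Sum>j\<in>J. c j * g j x) h = (\<integral>x. (\<Sum>j\<in>J. c j * (g j x * cnj (h x))) \<partial>LD D)"
    unfolding L2_inner_def by (simp add: sum_distrib_right mult.assoc)
  also have "\<dots> = (\<Sum>j\<in>J. c j * L2_inner D (g j) h)"
    unfolding L2_inner_def using assms sq_int_mult_cnj_integrable
    by (subst Bochner_Integration.integral_sum) (auto intro!: integrable_mult_right)
  finally show ?thesis .
qed

lemma L2_inner_sum_right:
  assumes "\<And>j. j \<in> J \<Longrightarrow> sq_int D (g j)" "sq_int D h"
  shows "L2_inner D h (\<lambda>x. \<Sum>j\<in>J. c j * g j x) = (\<Sum>j\<in>J. cnj (c j) * L2_inner D h (g j))"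
  using L2_inner_sum_left[of J D g h c, OF assms]
  by (subst L2_inner_commute) (simp add: L2_inner_commute[of D h])

lemma L2_inner_self:
  assumes "sq_int D g"
  shows "L2_inner D g g = of_real (\<integral>x. (cmod (g x))\<^sup>2 \<partial>LD D)"
proof -
  have "(\<lambda>x. g x * cnj (g x)) = (\<lambda>x. of_real ((cmod (g x))\<^sup>2))"
    by (rule ext) (rule complex_norm_square[symmetric])
  moreover have "integrable (LD D) (\<lambda>x. (cmod (g x))\<^sup>2)"
    using assms by (simp add: sq_int_def)
  ultimately show ?thesis
    unfolding L2_inner_def by (simp only: integral_bounded_linear[OF bounded_linear_of_real])
qed

lemma orthonormal_basis_L2_sq_int: "orthonormal_basis_L2 D \<phi> \<Longrightarrow> sq_int D (\<phi> j)"
  by (simp add: orthonormal_basis_L2_def)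

lemma L2_inner_basis_sum:
  assumes "orthonormal_basis_L2 D \<phi>"
  shows "L2_inner D (\<phi> j) (\<lambda>x. \<Sum>k<m. \<beta> k * \<phi> k x) = (if j < m then cnj (\<beta> j) else 0)"
proof -
  have "L2_inner D (\<phi> j) (\<lambda>x. \<Sum>k<m. \<beta> k * \<phi> k x) = (\<Sum>k<m. cnj (\<beta> k) * L2_inner D (\<phi> j) (\<phi> k))"
    using assms by (simp add: L2_inner_sum_right orthonormal_basis_L2_sq_int)
  also have "\<dots> = (\<Sum>k<m. if k = j then cnj (\<beta> k) else 0)"
    using assms by (intro sum.cong) (auto simp: orthonormal_basis_L2_def)
  finally show ?thesis
    by simp
qed

lemma L2_dist_sq_basis_sum:
  assumes ob: "orthonormal_basis_L2 D \<phi>" and g: "sq_int D g"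
  defines "\<alpha> j \<equiv> L2_inner D g (\<phi> j)"
  shows "(\<integral>x. (cmod (g x - (\<Sum>j<m. \<beta> j * \<phi> j x)))\<^sup>2 \<partial>LD D)
      = (\<integral>x. (cmod (g x))\<^sup>2 \<partial>LD D) - (\<Sum>j<m. (cmod (\<alpha> j))\<^sup>2) + (\<Sum>j<m. (cmod (\<alpha> j - \<beta> j))\<^sup>2)"
proof -
  define S where "S = (\<lambda>x. \<Sum>j<m. \<beta> j * \<phi> j x)"
  have sq: "sq_int D (\<phi> j)" for j
    using ob by (rule orthonormal_basis_L2_sq_int)
  have S: "sq_int D S"
    unfolding S_def by (rule sq_int_sum) (simp add: sq)
  have gS: "L2_inner D g S = (\<Sum>j<m. cnj (\<beta> j) * \<alpha> j)"
    unfolding S_def \<alpha>_def by (simp add: L2_inner_sum_right sq g)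
  have Sg: "L2_inner D S g = (\<Sum>j<m. \<beta> j * cnj (\<alpha> j))"
    unfolding S_def \<alpha>_def by (subst L2_inner_sum_left) (simp_all add: sq g L2_inner_commute[of D _ g])
  have SS: "L2_inner D S S = (\<Sum>j<m. \<beta> j * cnj (\<beta> j))"
    by (subst (1) S_def) (simp add: L2_inner_sum_left sq S, simp add: S_def L2_inner_basis_sum[OF ob])
  have "complex_of_real (\<integral>x. (cmod (g x - S x))\<^sup>2 \<partial>LD D) = L2_inner D (\<lambda>x. g x - S x) (\<lambda>x. g x - S x)"
    by (rule L2_inner_self[OF sq_int_diff[OF g S], symmetric])
  also have "\<dots> = L2_inner D g g - L2_inner D g S - (L2_inner D S g - L2_inner D S S)"
    using g S sq_int_diff[OF g S] by (simp add: L2_inner_diff_left L2_inner_diff_right)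
  also have "\<dots> = of_real (\<integral>x. (cmod (g x))\<^sup>2 \<partial>LD D) - (\<Sum>j<m. \<alpha> j * cnj (\<alpha> j))
      + (\<Sum>j<m. (\<alpha> j - \<beta> j) * cnj (\<alpha> j - \<beta> j))"
    unfolding gS Sg SS L2_inner_self[OF g]
    by (simp add: algebra_simps sum.distrib sum_subtractf)
  also have "\<dots> = of_real ((\<integral>x. (cmod (g x))\<^sup>2 \<partial>LD D) - (\<Sum>j<m. (cmod (\<alpha> j))\<^sup>2)
      + (\<Sum>j<m. (cmod (\<alpha> j - \<beta> j))\<^sup>2))"
    by (simp only: of_real_add of_real_diff of_real_sum complex_norm_square)
  finally show ?thesis
    unfolding S_def of_real_eq_iff .
qed

context
  fixes D :: "'a::euclidean_space set" and \<phi> :: "nat \<Rightarrow> 'a \<Rightarrow> complex" and f :: "'a \<Rightarrow> real"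
  assumes ob: "orthonormal_basis_L2 D \<phi>" and f: "sq_int D (\<lambda>x. complex_of_real (f x))"
begin

lemma L2_dist_sq_coef_sum:
  "(\<integral>x. (cmod (of_real (f x) - (\<Sum>j<m. \<beta> j * \<phi> j x)))\<^sup>2 \<partial>LD D)
     = (\<integral>x. (f x)\<^sup>2 \<partial>LD D) - (\<Sum>j<m. (cmod (coef D \<phi> f j))\<^sup>2) + (\<Sum>j<m. (cmod (coef D \<phi> f j - \<beta> j))\<^sup>2)"
  using L2_dist_sq_basis_sum[OF ob f] by (simp add: coef_def)

lemma coef_sq_sums: "(\<lambda>j. (cmod (coef D \<phi> f j))\<^sup>2) sums (\<integral>x. (f x)\<^sup>2 \<partial>LD D)"
proof -
  have "(\<lambda>m. \<integral>x. (cmod (of_real (f x) - (\<Sum>j<m. coef D \<phi> f j * \<phi> j x)))\<^sup>2 \<partial>LD D) \<longlonglongrightarrow> 0"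
    using ob f by (simp add: orthonormal_basis_L2_def coef_def)
  then have "(\<lambda>m. (\<integral>x. (f x)\<^sup>2 \<partial>LD D) - (\<Sum>j<m. (cmod (coef D \<phi> f j))\<^sup>2)) \<longlonglongrightarrow> 0"
    by (simp add: L2_dist_sq_coef_sum)
  then have "(\<lambda>m. (\<integral>x. (f x)\<^sup>2 \<partial>LD D) - ((\<integral>x. (f x)\<^sup>2 \<partial>LD D) - (\<Sum>j<m. (cmod (coef D \<phi> f j))\<^sup>2)))
      \<longlonglongrightarrow> (\<integral>x. (f x)\<^sup>2 \<partial>LD D) - 0"
    by (intro tendsto_diff tendsto_const)
  then show ?thesis
    by (simp add: sums_def)
qed

lemma approx_err_eq: "approx_err D \<phi> f m = (\<integral>x. (f x)\<^sup>2 \<partial>LD D) - (\<Sum>j<m. (cmod (coef D \<phi> f j))\<^sup>2)"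
  unfolding approx_err_def by (rule sums_unique[symmetric, OF sums_split_initial_segment[OF coef_sq_sums]])

lemma approx_err_eq_L2_dist_sq:
  "approx_err D \<phi> f m = (\<integral>x. (cmod (of_real (f x) - (\<Sum>j<m. coef D \<phi> f j * \<phi> j x)))\<^sup>2 \<partial>LD D)"
  by (simp add: L2_dist_sq_coef_sum approx_err_eq)

lemma approx_err_nonneg: "approx_err D \<phi> f m \<ge> 0"
  by (simp add: approx_err_eq_L2_dist_sq)

lemma antimono_approx_err: "antimono (approx_err D \<phi> f)"
  by (intro antimonoI) (simp add: approx_err_eq sum_mono2)

lemma approx_err_tendsto_0: "approx_err D \<phi> f \<longlonglongrightarrow> 0"
  using ob f by (simp add: approx_err_eq_L2_dist_sq[abs_def] orthonormal_basis_L2_def coef_def)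

lemma nn_integral_L2_dist_sq_coef_sum:
  "(\<integral>\<^sup>+x. ennreal ((cmod (of_real (f x) - (\<Sum>j<m. \<beta> j * \<phi> j x)))\<^sup>2) \<partial>LD D)
     = ennreal (approx_err D \<phi> f m) + (\<Sum>j<m. ennreal ((cmod (coef D \<phi> f j - \<beta> j))\<^sup>2))"
proof -
  have "sq_int D (\<lambda>x. of_real (f x) - (\<Sum>j<m. \<beta> j * \<phi> j x))"
    using f by (intro sq_int_diff sq_int_sum) (simp_all add: orthonormal_basis_L2_sq_int[OF ob])
  then have "(\<integral>\<^sup>+x. ennreal ((cmod (of_real (f x) - (\<Sum>j<m. \<beta> j * \<phi> j x)))\<^sup>2) \<partial>LD D)
      = ennreal (approx_err D \<phi> f m + (\<Sum>j<m. (cmod (coef D \<phi> f j - \<beta> j))\<^sup>2))"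
    by (simp add: sq_int_def nn_integral_eq_integral L2_dist_sq_coef_sum approx_err_eq)
  also have "\<dots> = ennreal (approx_err D \<phi> f m) + (\<Sum>j<m. ennreal ((cmod (coef D \<phi> f j - \<beta> j))\<^sup>2))"
    by (simp add: approx_err_nonneg ennreal_plus sum_nonneg)
  finally show ?thesis .
qed

end

lemma uniform_dither_sign_integral:
  fixes c y :: real
  assumes "0 < c" "-c \<le> y" "y \<le> c"
  shows "(\<integral>t. (if y > t then 1 else -1 :: real) \<partial>uniform_measure lborel {-c..c}) = y / c"
proof -
  let ?U = "uniform_measure lborel {-c..c}"
  interpret U: prob_space ?U
    using assms(1) by (intro prob_space_uniform_measure) auto
  have ind: "integrable ?U (indicator {..<y} :: real \<Rightarrow> real)"
    by (rule U.integrable_const_bound[where B=1]) (auto simp: indicator_def)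
  have "(\<lambda>t. if y > t then 1 else -1 :: real) = (\<lambda>t. 2 * indicator {..<y} t - 1)"
    by (auto simp: indicator_def)
  then have "(\<integral>t. (if y > t then 1 else -1 :: real) \<partial>?U) = 2 * measure ?U {..<y} - 1"
    using ind U.prob_space by (simp add: Bochner_Integration.integral_diff)
  also have "measure ?U {..<y} = (y + c) / (2 * c)"
  proof -
    have "{-c..c} \<inter> {..<y} = {-c..<y}"
      using assms by auto
    then show ?thesis
      using assms by (subst measure_uniform_measure) auto
  qed
  finally show ?thesis
    using assms(1) by (simp add: field_simps)
qed

definition coef_summand ::
    "real \<Rightarrow> ('a \<Rightarrow> complex) \<Rightarrow> ('a \<Rightarrow> real) \<Rightarrow> ('a \<Rightarrow> real) \<Rightarrow> 'a \<times> real \<times> real \<Rightarrow> complex" where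
  "coef_summand c \<psi> pX f s =
     of_real c * cnj (\<psi> (fst s)) / of_real (pX (fst s)) * of_real (bit f s)"

lemma coef_hat_eq_mean:
  "coef_hat c n \<phi> pX f \<omega> j = (\<Sum>i<n. coef_summand c (\<phi> j) pX f (\<omega> i)) / of_nat n"
  by (simp add: coef_hat_def coef_summand_def sum_distrib_left sum_divide_distrib field_simps)

lemma abs_bit [simp]: "\<bar>bit f s\<bar> = 1"
  by (simp add: bit_def split: prod.splits)

locale one_bit_sampling =
  fixes D :: "'a::euclidean_space set" and a b c :: real
    and f pX :: "'a \<Rightarrow> real" and pZ :: "real measure"
  assumes a_pos: "0 < a" and b_pos: "0 < b" and c_eq: "c = a + b"
    and f_measurable: "f \<in> borel_measurable (LD D)" and f_bounded: "\<forall>x\<in>D. \<bar>f x\<bar> \<le> a"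
    and pX_measurable: "pX \<in> borel_measurable (LD D)" and pX_pos: "\<forall>x\<in>D. pX x > 0"
    and prob_space_pX: "prob_space (density (LD D) (\<lambda>x. ennreal (pX x)))"
    and prob_space_pZ: "prob_space pZ" and sets_pZ: "sets pZ = sets borel"
    and pZ_bounded: "AE z in pZ. z \<in> {-b..b}" and pZ_mean: "(\<integral>z. z \<partial>pZ) = 0"
begin

abbreviation "PX \<equiv> density (LD D) (\<lambda>x. ennreal (pX x))"
abbreviation "PT \<equiv> uniform_measure lborel {-c..c}"
abbreviation "PS \<equiv> sample_measure D pX pZ c"

lemma c_pos: "0 < c"
  using a_pos b_pos c_eq by simp

lemma prob_space_PT: "prob_space PT"
  using c_pos by (intro prob_space_uniform_measure) auto

lemma prob_space_noise: "prob_space (pZ \<Otimes>\<^sub>M PT)"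
  by (rule prob_space_pair[OF prob_space_pZ prob_space_PT])

lemma prob_space_sample: "prob_space PS"
  unfolding sample_measure_def by (rule prob_space_pair[OF prob_space_pX prob_space_noise])

lemma prob_space_data_measure: "prob_space (data_measure D pX pZ c n)"
  unfolding data_measure_def by (rule prob_space_PiM[OF prob_space_sample])

lemma measurable_fst_sample:
  "g \<in> borel_measurable (LD D) \<Longrightarrow> (\<lambda>s. g (fst s)) \<in> borel_measurable PS"
  unfolding sample_measure_def
  by (rule measurable_compose[OF measurable_fst]) (simp add: measurable_cong_sets[OF sets_density refl])

lemma measurable_bit: "bit f \<in> borel_measurable PS"
proof -
  have "(\<lambda>z. z) \<in> borel_measurable pZ"
    by (simp add: measurable_cong_sets[OF sets_pZ refl])
  then have [measurable]: "(\<lambda>s. fst (snd s)) \<in> borel_measurable PS"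
    unfolding sample_measure_def by (intro measurable_compose[OF measurable_snd] measurable_compose[OF measurable_fst])
  have "(\<lambda>t. t) \<in> borel_measurable PT"
    by (simp add: measurable_cong_sets[OF sets_uniform_measure refl])
  then have [measurable]: "(\<lambda>s. snd (snd s)) \<in> borel_measurable PS"
    unfolding sample_measure_def by (intro measurable_compose[OF measurable_snd] measurable_compose[OF measurable_snd])
  have [measurable]: "(\<lambda>s. f (fst s)) \<in> borel_measurable PS"
    by (rule measurable_fst_sample[OF f_measurable])
  have "bit f = (\<lambda>s. if f (fst s) + fst (snd s) > snd (snd s) then 1 else -1)"
    by (auto simp: fun_eq_iff bit_def split: prod.splits)
  also have "\<dots> \<in> borel_measurable PS"
    by measurable
  finally show ?thesis .
qed

lemma nn_integral_sample_fst:
  assumes "g \<in> borel_measurable (LD D)"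
  shows "(\<integral>\<^sup>+s. ennreal (g (fst s)) \<partial>PS) = (\<integral>\<^sup>+x. ennreal (pX x) * ennreal (g x) \<partial>LD D)"
proof -
  interpret noise: prob_space "pZ \<Otimes>\<^sub>M PT"
    by (rule prob_space_noise)
  have [measurable]: "g \<in> borel_measurable PX"
    using assms by (simp add: measurable_cong_sets[OF sets_density refl])
  have "(\<integral>\<^sup>+s. ennreal (g (fst s)) \<partial>PS) = (\<integral>\<^sup>+x. ennreal (g x) \<partial>distr PS PX fst)"
    unfolding sample_measure_def by (rule nn_integral_distr[symmetric]) (simp_all add: noise.distr_pair_fst)
  also have "\<dots> = (\<integral>\<^sup>+x. ennreal (pX x) * ennreal (g x) \<partial>LD D)"
    unfolding sample_measure_def noise.distr_pair_fst
    using assms pX_measurable by (intro nn_integral_density) auto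
  finally show ?thesis .
qed

lemma integral_bit_given_x:
  assumes "x \<in> D"
  shows "(\<integral>q. bit f (x, q) \<partial>(pZ \<Otimes>\<^sub>M PT)) = f x / c"
proof -
  interpret pZ: prob_space pZ
    by (rule prob_space_pZ)
  interpret PT: prob_space PT
    by (rule prob_space_PT)
  interpret noise: pair_prob_space pZ PT ..
  have [measurable]: "(\<lambda>z. z) \<in> borel_measurable pZ"
    by (simp add: measurable_cong_sets[OF sets_pZ refl])
  have [measurable]: "(\<lambda>t. t) \<in> borel_measurable PT"
    by (simp add: measurable_cong_sets[OF sets_uniform_measure refl])
  define h where "h q = (if f x + fst q > snd q then 1 else -1 :: real)" for q
  have bit_h: "bit f (x, q) = h q" for q
    by (cases q) (simp add: bit_def h_def)
  have h_meas: "h \<in> borel_measurable (pZ \<Otimes>\<^sub>M PT)"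
    unfolding h_def by measurable
  have h_int: "integrable (pZ \<Otimes>\<^sub>M PT) h"
    by (rule noise.integrable_const_bound[where B=1, OF _ h_meas]) (simp add: h_def)
  have z_int: "integrable pZ (\<lambda>z. z)"
    by (rule pZ.integrable_const_bound[where B=b]) (use pZ_bounded in \<open>auto elim!: AE_mp\<close>)
  have "(\<integral>q. h q \<partial>(pZ \<Otimes>\<^sub>M PT)) = (\<integral>z. (\<integral>t. h (z, t) \<partial>PT) \<partial>pZ)"
    by (rule noise.integral_fst'[OF h_int, symmetric])
  also have "\<dots> = (\<integral>z. (f x + z) / c \<partial>pZ)"
  proof (rule integral_cong_AE)
    show "(\<lambda>z. \<integral>t. h (z, t) \<partial>PT) \<in> borel_measurable pZ"
      using noise.integrable_fst'[OF h_int] by simp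
    show "AE z in pZ. (\<integral>t. h (z, t) \<partial>PT) = (f x + z) / c"
      using pZ_bounded
    proof (rule AE_mp, intro AE_I2 impI)
      fix z :: real
      assume "z \<in> {-b..b}"
      \<comment> \<open>this is why the dither range is \<open>c = a + b\<close>\<close>
      then have "-c \<le> f x + z" "f x + z \<le> c"
        using f_bounded assms c_eq by (auto simp: abs_le_iff)
      then show "(\<integral>t. h (z, t) \<partial>PT) = (f x + z) / c"
        using uniform_dither_sign_integral[OF c_pos] by (simp add: h_def)
    qed
  qed simp
  also have "\<dots> = f x / c"
    using z_int pZ_mean pZ.prob_space by simp
  finally show ?thesis
    by (simp add: bit_h)
qed

lemma measurable_coef_summand:
  assumes "\<psi> \<in> borel_measurable (LD D)"
  shows "coef_summand c \<psi> pX f \<in> borel_measurable PS"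
proof -
  have [measurable]: "(\<lambda>s. \<psi> (fst s)) \<in> borel_measurable PS" "(\<lambda>s. pX (fst s)) \<in> borel_measurable PS"
    using assms pX_measurable by (simp_all add: measurable_fst_sample)
  have [measurable]: "bit f \<in> borel_measurable PS"
    by (rule measurable_bit)
  show ?thesis
    unfolding coef_summand_def[abs_def] by measurable
qed

lemma nn_integral_coef_summand_sq:
  assumes "\<psi> \<in> borel_measurable (LD D)"
  shows "(\<integral>\<^sup>+s. ennreal ((cmod (coef_summand c \<psi> pX f s))\<^sup>2) \<partial>PS)
      = ennreal (c\<^sup>2) * (\<integral>\<^sup>+x. ennreal ((cmod (\<psi> x))\<^sup>2 / pX x) \<partial>LD D)"
proof -
  define g where "g x = c\<^sup>2 * (cmod (\<psi> x))\<^sup>2 / (pX x)\<^sup>2" for x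
  have "g \<in> borel_measurable (LD D)"
    unfolding g_def using assms pX_measurable by measurable
  have "(\<integral>\<^sup>+s. ennreal ((cmod (coef_summand c \<psi> pX f s))\<^sup>2) \<partial>PS) = (\<integral>\<^sup>+s. ennreal (g (fst s)) \<partial>PS)"
    using c_pos by (simp add: coef_summand_def g_def norm_mult norm_divide power_divide power_mult_distrib)
  also have "\<dots> = (\<integral>\<^sup>+x. ennreal (pX x) * ennreal (g x) \<partial>LD D)"
    by (rule nn_integral_sample_fst) fact
  also have "\<dots> = (\<integral>\<^sup>+x. ennreal (c\<^sup>2) * ennreal ((cmod (\<psi> x))\<^sup>2 / pX x) \<partial>LD D)"
  proof (rule nn_integral_cong)
    fix x
    assume "x \<in> space (LD D)"
    then have "pX x > 0"
      using pX_pos by simp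
    then show "ennreal (pX x) * ennreal (g x) = ennreal (c\<^sup>2) * ennreal ((cmod (\<psi> x))\<^sup>2 / pX x)"
      by (simp add: g_def ennreal_mult'[symmetric] power2_eq_square)
  qed
  also have "\<dots> = ennreal (c\<^sup>2) * (\<integral>\<^sup>+x. ennreal ((cmod (\<psi> x))\<^sup>2 / pX x) \<partial>LD D)"
    using assms pX_measurable by (intro nn_integral_cmult) measurable
  finally show ?thesis .
qed

lemma integral_coef_summand:
  assumes \<psi>: "\<psi> \<in> borel_measurable (LD D)" and int: "integrable PS (coef_summand c \<psi> pX f)"
  shows "(\<integral>s. coef_summand c \<psi> pX f s \<partial>PS) = L2_inner D (\<lambda>x. of_real (f x)) \<psi>"
proof -
  interpret noise: prob_space "pZ \<Otimes>\<^sub>M PT"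
    by (rule prob_space_noise)
  interpret PX: prob_space PX
    by (rule prob_space_pX)
  interpret pair: pair_prob_space PX "pZ \<Otimes>\<^sub>M PT" ..
  have "(\<integral>s. coef_summand c \<psi> pX f s \<partial>PS) = (\<integral>x. (\<integral>q. coef_summand c \<psi> pX f (x, q) \<partial>(pZ \<Otimes>\<^sub>M PT)) \<partial>PX)"
    using int unfolding sample_measure_def by (rule pair.integral_fst'[symmetric])
  also have "\<dots> = (\<integral>x. cnj (\<psi> x) * of_real (f x) / of_real (pX x) \<partial>PX)"
  proof (rule Bochner_Integration.integral_cong[OF refl])
    fix x
    assume "x \<in> space PX"
    then have x: "x \<in> D"
      by simp
    have "(\<lambda>q. bit f (x, q)) \<in> borel_measurable (pZ \<Otimes>\<^sub>M PT)"
      using measurable_compose[OF measurable_Pair1' measurable_bit[unfolded sample_measure_def]] x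
      by (simp add: comp_def)
    then have "integrable (pZ \<Otimes>\<^sub>M PT) (\<lambda>q. bit f (x, q))"
      by (intro noise.integrable_const_bound[where B=1]) simp_all
    then have "(\<integral>q. coef_summand c \<psi> pX f (x, q) \<partial>(pZ \<Otimes>\<^sub>M PT))
        = of_real c * cnj (\<psi> x) / of_real (pX x) * of_real (\<integral>q. bit f (x, q) \<partial>(pZ \<Otimes>\<^sub>M PT))"
      by (simp add: coef_summand_def integral_bounded_linear[OF bounded_linear_of_real])
    then show "(\<integral>q. coef_summand c \<psi> pX f (x, q) \<partial>(pZ \<Otimes>\<^sub>M PT)) = cnj (\<psi> x) * of_real (f x) / of_real (pX x)"
      using c_pos by (simp add: integral_bit_given_x[OF x])
  qed
  also have "\<dots> = (\<integral>x. pX x *\<^sub>R (cnj (\<psi> x) * of_real (f x) / of_real (pX x)) \<partial>LD D)"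
    using \<psi> f_measurable pX_measurable pX_pos by (intro integral_density) (auto intro!: AE_I2 less_imp_le)
  also have "\<dots> = L2_inner D (\<lambda>x. of_real (f x)) \<psi>"
    unfolding L2_inner_def
    by (rule Bochner_Integration.integral_cong) (use pX_pos in \<open>auto simp: scaleR_conv_of_real\<close>)
  finally show ?thesis .
qed

lemma coef_hat_mean_sq_error_le:
  assumes \<phi>: "\<phi> j \<in> borel_measurable (LD D)" and n: "n \<ge> 1"
  shows "(\<integral>\<^sup>+\<omega>. ennreal ((cmod (coef D \<phi> f j - coef_hat c n \<phi> pX f \<omega> j))\<^sup>2) \<partial>data_measure D pX pZ c n)
      \<le> ennreal (c\<^sup>2 / n) * (\<integral>\<^sup>+x. ennreal ((cmod (\<phi> j x))\<^sup>2 / pX x) \<partial>LD D)"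
proof (cases "(\<integral>\<^sup>+x. ennreal ((cmod (\<phi> j x))\<^sup>2 / pX x) \<partial>LD D) = \<infinity>")
  case True
  then show ?thesis
    using c_pos n by (simp add: ennreal_mult_top)
next
  case False
  interpret PS: prob_space PS
    by (rule prob_space_sample)
  define w where "w = coef_summand c (\<phi> j) pX f"
  have w: "w \<in> borel_measurable PS"
    unfolding w_def by (rule measurable_coef_summand[OF \<phi>])
  have w2_nn: "(\<integral>\<^sup>+s. ennreal ((cmod (w s))\<^sup>2) \<partial>PS) = ennreal (c\<^sup>2) * (\<integral>\<^sup>+x. ennreal ((cmod (\<phi> j x))\<^sup>2 / pX x) \<partial>LD D)"
    unfolding w_def by (rule nn_integral_coef_summand_sq[OF \<phi>])
  have w2: "integrable PS (\<lambda>s. (cmod (w s))\<^sup>2)"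
    using w False by (intro integrableI_bounded) (simp_all add: w2_nn ennreal_mult_less_top less_top)
  have mean: "PS.expectation w = coef D \<phi> f j"
    unfolding coef_def w_def
    by (rule integral_coef_summand[OF \<phi> PS.square_norm_integrable_imp_integrable[OF w w2, unfolded w_def]])
  have "(\<integral>\<^sup>+\<omega>. ennreal ((cmod (coef D \<phi> f j - coef_hat c n \<phi> pX f \<omega> j))\<^sup>2) \<partial>data_measure D pX pZ c n)
      = (\<integral>\<^sup>+\<omega>. ennreal ((cmod (PS.expectation w - (\<Sum>i<n. w (\<omega> i)) / of_nat n))\<^sup>2) \<partial>PiM {..<n} (\<lambda>_. PS))"
    unfolding data_measure_def coef_hat_eq_mean mean[symmetric] w_def ..
  also have "\<dots> \<le> ennreal (PS.expectation (\<lambda>s. (cmod (w s))\<^sup>2) / n)"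
    by (rule PS.iid_sample_mean_sq_error_le[OF w w2 n])
  also have "\<dots> = ennreal (1 / n) * (\<integral>\<^sup>+s. ennreal ((cmod (w s))\<^sup>2) \<partial>PS)"
    using w2 by (simp add: nn_integral_eq_integral ennreal_mult[symmetric])
  also have "\<dots> = ennreal (c\<^sup>2 / n) * (\<integral>\<^sup>+x. ennreal ((cmod (\<phi> j x))\<^sup>2 / pX x) \<partial>LD D)"
    unfolding w2_nn by (simp add: ennreal_mult[symmetric] mult.assoc[symmetric])
  finally show ?thesis .
qed

lemma sq_int_f: "compact D \<Longrightarrow> sq_int D (\<lambda>x. of_real (f x))"
  using f_measurable f_bounded by (intro sq_int_bounded[where a=a]) simp_all

lemma expected_L2_error_f_hat_le:
  assumes ob: "orthonormal_basis_L2 D \<phi>" and "compact D" and n: "n \<ge> 1"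
  shows "(\<integral>\<^sup>+\<omega>. (\<integral>\<^sup>+x. ennreal ((cmod (of_real (f x) - f_hat c n m \<phi> pX f \<omega> x))\<^sup>2) \<partial>LD D)
             \<partial>data_measure D pX pZ c n)
         \<le> ennreal (c\<^sup>2 / n) * (\<Sum>j<m. \<integral>\<^sup>+x. ennreal ((cmod (\<phi> j x))\<^sup>2 / pX x) \<partial>LD D)
           + ennreal (approx_err D \<phi> f m)"
proof -
  interpret data: prob_space "data_measure D pX pZ c n"
    by (rule prob_space_data_measure)
  have f: "sq_int D (\<lambda>x. of_real (f x))"
    using \<open>compact D\<close> by (rule sq_int_f)
  have \<phi>: "\<phi> j \<in> borel_measurable (LD D)" for j
    using orthonormal_basis_L2_sq_int[OF ob] by (simp add: sq_int_def)
  have [measurable]: "coef_summand c (\<phi> j) pX f \<in> borel_measurable PS" for j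
    by (rule measurable_coef_summand[OF \<phi>])
  have [measurable]: "(\<lambda>\<omega>. coef_hat c n \<phi> pX f \<omega> j) \<in> borel_measurable (data_measure D pX pZ c n)" for j
    unfolding data_measure_def coef_hat_eq_mean by measurable
  have "(\<integral>\<^sup>+\<omega>. (\<integral>\<^sup>+x. ennreal ((cmod (of_real (f x) - f_hat c n m \<phi> pX f \<omega> x))\<^sup>2) \<partial>LD D)
             \<partial>data_measure D pX pZ c n)
      = (\<integral>\<^sup>+\<omega>. ennreal (approx_err D \<phi> f m)
           + (\<Sum>j<m. ennreal ((cmod (coef D \<phi> f j - coef_hat c n \<phi> pX f \<omega> j))\<^sup>2)) \<partial>data_measure D pX pZ c n)"
    by (simp add: f_hat_def nn_integral_L2_dist_sq_coef_sum[OF ob f])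
  also have "\<dots> = ennreal (approx_err D \<phi> f m)
      + (\<Sum>j<m. \<integral>\<^sup>+\<omega>. ennreal ((cmod (coef D \<phi> f j - coef_hat c n \<phi> pX f \<omega> j))\<^sup>2) \<partial>data_measure D pX pZ c n)"
    by (simp add: nn_integral_add nn_integral_sum data.emeasure_space_1 del: sum_ennreal)
  also have "\<dots> \<le> ennreal (approx_err D \<phi> f m)
      + (\<Sum>j<m. ennreal (c\<^sup>2 / n) * (\<integral>\<^sup>+x. ennreal ((cmod (\<phi> j x))\<^sup>2 / pX x) \<partial>LD D))"
    by (intro add_left_mono sum_mono coef_hat_mean_sq_error_le[OF \<phi> n])
  finally show ?thesis
    by (simp add: sum_distrib_left add.commute)
qed

end

theorem theorem1:
  fixes D :: "'a::euclidean_space set"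
    and a b c :: real
    and \<phi> :: "nat \<Rightarrow> 'a \<Rightarrow> complex"
    and f pX :: "'a \<Rightarrow> real"
    and pZ :: "real measure"
    and n m :: nat
  assumes "compact D"
    and "0 < a" and "0 < b" and "c = a + b"
    and "orthonormal_basis_L2 D \<phi>"
    and "f \<in> borel_measurable (LD D)" and "\<forall>x\<in>D. \<bar>f x\<bar> \<le> a"
    and "pX \<in> borel_measurable (LD D)" and "\<forall>x\<in>D. pX x > 0"
    and "prob_space (density (LD D) (\<lambda>x. ennreal (pX x)))"
    and "prob_space pZ" and "sets pZ = sets borel"
    and "AE z in pZ. z \<in> {-b..b}" and "(\<integral>z. z \<partial>pZ) = 0"
    and "n \<ge> 1" and "m \<ge> 1"
  shows "((\<integral>\<^sup>+ \<omega>. (\<integral>\<^sup>+ x. ennreal ((cmod (complex_of_real (f x) - f_hat c n m \<phi> pX f \<omega> x))\<^sup>2) \<partial>LD D)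
             \<partial>data_measure D pX pZ c n)
         \<le> ennreal (c\<^sup>2 / real n) *
             (\<Sum>j<m. \<integral>\<^sup>+ x. ennreal ((cmod (\<phi> j x))\<^sup>2 / pX x) \<partial>LD D)
           + ennreal (approx_err D \<phi> f m))
     \<and> (\<forall>k. approx_err D \<phi> f k \<ge> 0)
     \<and> antimono (approx_err D \<phi> f)
     \<and> approx_err D \<phi> f \<longlonglongrightarrow> 0"
proof -
  interpret one_bit_sampling D a b c f pX pZ
    unfolding one_bit_sampling_def using assms by blast
  have f: "sq_int D (\<lambda>x. of_real (f x))"
    using assms(1) by (rule sq_int_f)
  show ?thesis
    using expected_L2_error_f_hat_le[OF assms(5,1,15)] approx_err_nonneg[OF assms(5) f]
      antimono_approx_err[OF assms(5) f] approx_err_tendsto_0[OF assms(5) f]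
    by blast
qed

end
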